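(* Assume $\int_{(0,1)}\upsilon^p\lambda(d\upsilon)<\infty$ for some $p\in(1,2)$ and $\int_{[1,\infty)}\upsilon\,\lambda(d\upsilon)<\infty$. Then for every $q\ge1$ there is a constant $\mathbf c_q$ with $\lim_{q\to\infty}\mathbf c_q=0$ such that for every $m\ge1$ and every $h\in(0,1)$, $$\int_{(0,q)^m}\mathbf 1_{\{\prod_{j=1}^m u_j\ge h\,q^m\}}\prod_{i=1}^m u_i\,\lambda(du_i)\le\frac{1}{p-1}\,\frac{(\mathbf c_q)^m h^{1-p}}{(m-1)!}\big[\log(2^m/h)\big]^{m-1}.$$ In particular, for every $\varepsilon\in(0,1)$, $$\int_{(0,q)^m}\mathbf 1_{\{\prod_{j=1}^m u_j\ge h\,q^m\}}\prod_{i=1}^m u_i\,\lambda(du_i)\le\frac{(2^{\varepsilon}\mathbf c_q/\varepsilon)^m}{p-1}\,h^{1-p-\varepsilon}.$$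
   Context: $\lambda$ is a positive measure on $(0,\infty)$ with $\lambda([a,\infty))<\infty$ for every $a>0$. *)

theory Defs
  imports "HOL-Analysis.Analysis"
begin

text \<open>The measure lambda on (0,infinity) is modelled as a Borel measure on the reals
  giving no mass to (-infinity,0] and finite mass to every [a,infinity), a > 0.\<close>

definition levy_like :: "real measure \<Rightarrow> bool" where
  "levy_like lam \<longleftrightarrow> sets lam = sets borel \<and> emeasure lam {..0} = 0 \<and>
     (\<forall>a>0. emeasure lam {a..} < \<infinity>)"

definition trunc_int :: "real measure \<Rightarrow> real \<Rightarrow> nat \<Rightarrow> real \<Rightarrow> ennreal" where
  "trunc_int lam q m h =
     (\<integral>\<^sup>+ u. indicator {u. (\<forall>i<m. 0 < u i \<and> u i < q) \<and> (\<Prod>j<m. u j) \<ge> h * q ^ m} u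
               * (\<Prod>i<m. ennreal (u i)) \<partial>(PiM {..<m} (\<lambda>_. lam)))"

end

theory Submission
  imports Defs
begin

text \<open>On the region of integration \<open>\<Prod> (u\<^sub>i / q) \<ge> h\<close>, hence
  \<open>1 \<le> h\<^bsup>1-p\<^esup> \<Prod> (u\<^sub>i / q)\<^bsup>p-1\<^esup>\<close>, so the integrand is dominated by
  \<open>h\<^bsup>1-p\<^esup> \<Prod> u\<^sub>i min(1, u\<^sub>i/q)\<^bsup>p-1\<^esup>\<close>. This product integral factorises into
  \<open>a(q)\<^sup>m\<close> with \<open>a(q) = \<integral> u min(1, u/q)\<^bsup>p-1\<^esup> \<lambda>(du)\<close>, and \<open>a(q) \<rightarrow> 0\<close> by dominated
  convergence, the integrand being bounded by \<open>u\<^sup>p\<close> on \<open>(0,1)\<close> and by \<open>u\<close> on \<open>[1,\<infinity>)\<close>.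
  With \<open>c\<^sub>q = 2 a(q)\<close> both stated bounds follow from \<open>h\<^bsup>1-p\<^esup> a(q)\<^sup>m\<close> by crude
  estimates: \<open>log(2\<^sup>m/h) \<ge> m log 2\<close>, \<open>(m-1)! \<le> m\<^bsup>m-1\<^esup>\<close> and \<open>2 log 2 \<ge> 1\<close>.\<close>

definition trunc_weight :: "real \<Rightarrow> real \<Rightarrow> real \<Rightarrow> real" where
  "trunc_weight p q u = (if 0 < u then u * min 1 (u / q) powr (p - 1) else 0)"

definition moment_weight :: "real \<Rightarrow> real \<Rightarrow> real" where
  "moment_weight p u = (if 0 < u \<and> u < 1 then u powr p else 0) + (if 1 \<le> u then u else 0)"

lemma trunc_weight_nonneg: "0 \<le> trunc_weight p q u"
  by (simp add: trunc_weight_def)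

lemma trunc_weight_eq:
  assumes "0 < u" "u \<le> q"
  shows "trunc_weight p q u = u * (u / q) powr (p - 1)"
  using assms by (simp add: trunc_weight_def)

lemma trunc_weight_le_moment_weight:
  assumes "1 \<le> q" "1 \<le> p"
  shows "trunc_weight p q u \<le> moment_weight p u"
proof -
  consider "u \<le> 0" | "0 < u" "u < 1" | "1 \<le> u" by linarith
  then show ?thesis
  proof cases
    case 1
    then show ?thesis by (simp add: trunc_weight_def moment_weight_def)
  next
    case 2
    have "u / q \<le> u" using 2 assms by (simp add: divide_le_eq mult_le_cancel_left1)
    then have "u * (u / q) powr (p - 1) \<le> u * u powr (p - 1)"
      using 2 assms by (intro mult_left_mono powr_mono2) auto
    also have "\<dots> = u powr p" using 2 by (simp add: powr_mult_base)
    finally show ?thesis using 2 assms by (simp add: trunc_weight_eq moment_weight_def)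
  next
    case 3
    have "min 1 (u / q) powr (p - 1) \<le> 1" using 3 assms by (intro powr_le1) auto
    then show ?thesis using 3 mult_left_mono[of _ 1 u]
      by (simp add: trunc_weight_def moment_weight_def)
  qed
qed

lemma trunc_weight_tendsto_0:
  assumes "1 < p"
  shows "((\<lambda>q. trunc_weight p q u) \<longlongrightarrow> 0) at_top"
proof (cases "0 < u")
  case True
  have "\<forall>\<^sub>F q in at_top. u * u powr (p - 1) * q powr (1 - p) = trunc_weight p q u"
    using eventually_ge_at_top[of u]
  proof eventually_elim
    case (elim q)
    then have "0 < q" using True by linarith
    then have "(u / q) powr (p - 1) = u powr (p - 1) / q powr (p - 1)"
      using True by (simp add: powr_divide)
    also have "\<dots> = u powr (p - 1) * q powr (1 - p)"
      using powr_minus[of q "p - 1"] by (simp add: divide_inverse)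
    finally show ?case using True elim by (simp add: trunc_weight_eq)
  qed
  moreover have "((\<lambda>q. u * u powr (p - 1) * q powr (1 - p)) \<longlongrightarrow> u * u powr (p - 1) * 0) at_top"
    using assms by (intro tendsto_mult tendsto_const tendsto_neg_powr filterlim_ident) auto
  ultimately show ?thesis by (simp add: Lim_transform_eventually)
qed (simp add: trunc_weight_def)

lemma prod_le_powr_prod_trunc:
  fixes u :: "nat \<Rightarrow> real"
  assumes u: "\<And>i. i < m \<Longrightarrow> 0 < u i" and large: "h * q ^ m \<le> (\<Prod>i<m. u i)"
    and "0 < h" "0 < q" "1 \<le> p"
  shows "(\<Prod>i<m. u i) \<le> h powr (1 - p) * (\<Prod>i<m. u i * (u i / q) powr (p - 1))"
proof -
  define X where "X = (\<Prod>i<m. u i / q)"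
  have "h \<le> X"
    using large \<open>0 < q\<close> by (simp add: X_def prod_dividef field_simps)
  then have "h powr (1 - p) * h powr (p - 1) \<le> h powr (1 - p) * X powr (p - 1)"
    using assms by (intro mult_left_mono powr_mono2) auto
  then have "1 \<le> h powr (1 - p) * X powr (p - 1)"
    using \<open>0 < h\<close> by (simp add: powr_add[symmetric])
  moreover have "0 \<le> (\<Prod>i<m. u i)"
    using u by (intro prod_nonneg) (simp add: less_imp_le)
  ultimately have "(\<Prod>i<m. u i) \<le> (\<Prod>i<m. u i) * (h powr (1 - p) * X powr (p - 1))"
    using mult_left_mono[of 1] by fastforce
  also have "X powr (p - 1) = (\<Prod>i<m. (u i / q) powr (p - 1))"
    unfolding X_def by (rule prod_powr_distrib)
  finally show ?thesis by (simp add: prod.distrib mult_ac)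
qed

lemma levy_like_sigma_finite:
  assumes "levy_like lam"
  shows "sigma_finite_measure lam"
proof
  from assms have sets_eq: "sets lam = sets borel"
    and fin: "\<And>a. a > 0 \<Longrightarrow> emeasure lam {a..} < \<infinity>" and neg: "emeasure lam {..0} = 0"
    unfolding levy_like_def by auto
  let ?A = "insert {..0::real} (range (\<lambda>n::nat. {inverse (real (Suc n))..}))"
  have "x \<in> \<Union>?A" for x :: real
  proof (cases "x \<le> 0")
    case False
    then obtain n where "inverse (real (Suc n)) < x" using reals_Archimedean[of x] by auto
    then have "x \<in> {inverse (real (Suc n))..}" by simp
    then show ?thesis by blast
  qed auto
  then have "\<Union>?A = space lam" using sets_eq_imp_space_eq[OF sets_eq] by auto
  moreover have "emeasure lam {inverse (real (Suc n))..} \<noteq> \<infinity>" for n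
    using fin[of "inverse (real (Suc n))"] by simp
  then have "\<forall>a\<in>?A. emeasure lam a \<noteq> \<infinity>" using neg by auto
  ultimately show "\<exists>A. countable A \<and> A \<subseteq> sets lam \<and> \<Union>A = space lam \<and> (\<forall>a\<in>A. emeasure lam a \<noteq> \<infinity>)"
    using sets_eq by (intro exI[of _ ?A]) auto
qed

lemma levy_like_measurable_iff:
  assumes "levy_like lam"
  shows "measurable lam M = measurable borel M"
  using assms by (intro measurable_cong_sets) (simp_all add: levy_like_def)

lemma trunc_weight_measurable:
  assumes "levy_like lam"
  shows "trunc_weight p q \<in> borel_measurable lam"
  unfolding levy_like_measurable_iff[OF assms] trunc_weight_def[abs_def] by measurable

lemma integrable_moment_weight:
  assumes "levy_like lam"
    and "(\<integral>\<^sup>+ v. indicator {0<..<1} v * ennreal (v powr p) \<partial>lam) < \<infinity>"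
    and "(\<integral>\<^sup>+ v. indicator {1..} v * ennreal v \<partial>lam) < \<infinity>"
  shows "integrable lam (moment_weight p)"
proof (rule integrableI_nonneg)
  show "moment_weight p \<in> borel_measurable lam"
    unfolding levy_like_measurable_iff[OF assms(1)] moment_weight_def[abs_def] by measurable
  show "AE x in lam. 0 \<le> moment_weight p x" by (simp add: moment_weight_def)
  have "(\<integral>\<^sup>+x. ennreal (moment_weight p x) \<partial>lam)
      = (\<integral>\<^sup>+x. indicator {0<..<1} x * ennreal (x powr p) + indicator {1..} x * ennreal x \<partial>lam)"
    by (rule nn_integral_cong) (auto simp: moment_weight_def indicator_def)
  also have "\<dots> = (\<integral>\<^sup>+ v. indicator {0<..<1} v * ennreal (v powr p) \<partial>lam)
                  + (\<integral>\<^sup>+ v. indicator {1..} v * ennreal v \<partial>lam)"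
    by (rule nn_integral_add) (auto simp: levy_like_measurable_iff[OF assms(1)])
  finally show "(\<integral>\<^sup>+x. ennreal (moment_weight p x) \<partial>lam) < \<infinity>" using assms(2,3) by simp
qed

lemma integrable_trunc_weight:
  assumes "levy_like lam" "integrable lam (moment_weight p)" "1 \<le> q" "1 \<le> p"
  shows "integrable lam (trunc_weight p q)"
proof (rule Bochner_Integration.integrable_bound[OF assms(2) trunc_weight_measurable[OF assms(1)]])
  have "norm (trunc_weight p q u) \<le> norm (moment_weight p u)" for u
    using trunc_weight_le_moment_weight[OF assms(3,4), of u] trunc_weight_nonneg[of p q u] by simp
  then show "AE u in lam. norm (trunc_weight p q u) \<le> norm (moment_weight p u)" by simp
qed

lemma trunc_moment_tendsto_0:
  assumes "levy_like lam" "integrable lam (moment_weight p)" "1 < p"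
  shows "((\<lambda>q. \<integral>u. trunc_weight p q u \<partial>lam) \<longlongrightarrow> 0) at_top"
proof -
  have "((\<lambda>q. \<integral>u. trunc_weight p q u \<partial>lam) \<longlongrightarrow> (\<integral>u. 0 \<partial>lam)) at_top"
  proof (rule integral_dominated_convergence_at_top[where w = "moment_weight p"])
    show "\<forall>\<^sub>F q in at_top. AE u in lam. norm (trunc_weight p q u) \<le> moment_weight p u"
      using assms(3) by (intro eventually_mono[OF eventually_ge_at_top[of 1]] AE_I2)
        (simp add: trunc_weight_nonneg trunc_weight_le_moment_weight)
  qed (use assms trunc_weight_tendsto_0 trunc_weight_measurable in auto)
  then show ?thesis by simp
qed

lemma trunc_int_le_trunc_moment_power:
  assumes "levy_like lam" "0 < q" "0 < h" "1 \<le> p"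
  shows "trunc_int lam q m h
    \<le> ennreal (h powr (1 - p)) * (\<integral>\<^sup>+u. trunc_weight p q u \<partial>lam) ^ m"
proof -
  interpret sigma_finite_measure lam by (rule levy_like_sigma_finite[OF assms(1)])
  interpret product_sigma_finite "\<lambda>_. lam" by unfold_locales
  note [measurable] = trunc_weight_measurable[OF assms(1)]
  have integrand: "indicator {u. (\<forall>i<m. 0 < u i \<and> u i < q) \<and> h * q ^ m \<le> (\<Prod>j<m. u j)} u
      * (\<Prod>i<m. ennreal (u i)) \<le> ennreal (h powr (1 - p)) * (\<Prod>i<m. ennreal (trunc_weight p q (u i)))"
    for u
  proof (cases "(\<forall>i<m. 0 < u i \<and> u i < q) \<and> h * q ^ m \<le> (\<Prod>j<m. u j)")
    case True
    moreover have "(\<Prod>i<m. trunc_weight p q (u i)) = (\<Prod>i<m. u i * (u i / q) powr (p - 1))"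
      using True by (intro prod.cong) (auto simp: trunc_weight_eq)
    ultimately have "(\<Prod>i<m. u i) \<le> h powr (1 - p) * (\<Prod>i<m. trunc_weight p q (u i))"
      using prod_le_powr_prod_trunc[of m u h q p] assms by simp
    then have "ennreal (\<Prod>i<m. u i) \<le> ennreal (h powr (1 - p)) * ennreal (\<Prod>i<m. trunc_weight p q (u i))"
      by (simp add: ennreal_mult[symmetric] prod_nonneg trunc_weight_nonneg ennreal_leI)
    moreover have "(\<Prod>i<m. ennreal (u i)) = ennreal (\<Prod>i<m. u i)"
      using True by (intro prod_ennreal) auto
    moreover have "ennreal (\<Prod>i<m. trunc_weight p q (u i)) = (\<Prod>i<m. ennreal (trunc_weight p q (u i)))"
      by (intro prod_ennreal[symmetric]) (simp add: trunc_weight_nonneg)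
    ultimately show ?thesis using True by simp
  qed simp
  have "trunc_int lam q m h
      \<le> (\<integral>\<^sup>+u. ennreal (h powr (1 - p)) * (\<Prod>i<m. ennreal (trunc_weight p q (u i))) \<partial>PiM {..<m} (\<lambda>_. lam))"
    unfolding trunc_int_def by (intro nn_integral_mono integrand)
  also have "\<dots> = ennreal (h powr (1 - p))
      * (\<integral>\<^sup>+u. (\<Prod>i<m. ennreal (trunc_weight p q (u i))) \<partial>PiM {..<m} (\<lambda>_. lam))"
    by (rule nn_integral_cmult) measurable
  also have "(\<integral>\<^sup>+u. (\<Prod>i<m. ennreal (trunc_weight p q (u i))) \<partial>PiM {..<m} (\<lambda>_. lam))
      = (\<Prod>i<m. \<integral>\<^sup>+x. ennreal (trunc_weight p q x) \<partial>lam)"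
    using product_nn_integral_prod[of "{..<m}" "\<lambda>_ x. ennreal (trunc_weight p q x)"] by simp
  finally show ?thesis by simp
qed

lemma one_le_two_ln_two: "1 \<le> 2 * ln (2::real)"
proof -
  have "exp 1 \<le> (4::real)" using exp_le by simp
  then have "1 \<le> ln (4::real)" by (simp add: ln_ge_iff)
  also have "ln (4::real) = 2 * ln 2" using ln_realpow[of 2 2] by simp
  finally show ?thesis .
qed

lemma power_le_log_power_div_fact:
  fixes a h :: real
  assumes "0 \<le> a" "1 \<le> m" "0 < h" "h \<le> 1"
  shows "a ^ m \<le> (2 * a) ^ m * ln (2 ^ m / h) ^ (m - 1) / fact (m - 1)"
proof -
  have "fact (m - 1) \<le> real ((m - 1) ^ (m - 1))"
    by (rule fact_le_power)
  then have "fact (m - 1) \<le> real m ^ (m - 1)"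
    using power_mono[of "real (m - 1)" "real m" "m - 1"] by simp
  then have "ln 2 ^ (m - 1) * fact (m - 1) \<le> ln 2 ^ (m - 1) * real m ^ (m - 1)"
    by (intro mult_left_mono) auto
  also have "\<dots> = (real m * ln 2) ^ (m - 1)"
    by (simp add: power_mult_distrib)
  also have "\<dots> \<le> ln (2 ^ m / h) ^ (m - 1)"
    using assms by (intro power_mono) (auto simp: ln_div ln_realpow)
  finally have log: "ln 2 ^ (m - 1) \<le> ln (2 ^ m / h) ^ (m - 1) / fact (m - 1)"
    by (simp add: field_simps)
  have "1 \<le> (2 * ln (2::real)) ^ (m - 1)"
    by (rule one_le_power[OF one_le_two_ln_two])
  then have "a ^ m \<le> a ^ m * (2 * ln 2) ^ (m - 1)"
    using mult_left_mono[of 1 _ "a ^ m"] assms(1) by simp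
  also have "\<dots> \<le> 2 * a ^ m * (2 * ln 2) ^ (m - 1)"
    using assms(1) by simp
  also have "\<dots> = (2 * a) ^ m * ln 2 ^ (m - 1)"
    using assms(2) by (cases m) (auto simp: power_mult_distrib)
  also have "\<dots> \<le> (2 * a) ^ m * (ln (2 ^ m / h) ^ (m - 1) / fact (m - 1))"
    using assms(1) log by (intro mult_left_mono) auto
  finally show ?thesis by simp
qed

lemma le_one_div_mult:
  fixes c x y :: real
  assumes "0 < c" "c \<le> 1" "x \<le> y" "0 \<le> y"
  shows "x \<le> 1 / c * y"
proof -
  have "1 \<le> 1 / c" using assms(1,2) by simp
  then show ?thesis using mult_right_mono[of 1 "1 / c" y] assms(3,4) by simp
qed

lemma powr_power_le_log_fact_bound:
  fixes a h p :: real
  assumes "0 \<le> a" "1 < p" "p \<le> 2" "1 \<le> m" "0 < h" "h \<le> 1"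
  shows "h powr (1 - p) * a ^ m
    \<le> 1 / (p - 1) * ((2 * a) ^ m * h powr (1 - p) / fact (m - 1)) * ln (2 ^ m / h) ^ (m - 1)"
proof -
  have "h \<le> 2 ^ m" using assms(6) one_le_power[of "2::real" m] by linarith
  then have "0 \<le> ln (2 ^ m / h)" using assms(5) by (intro ln_ge_zero) (simp add: le_divide_eq)
  then have "h powr (1 - p) * a ^ m
      \<le> h powr (1 - p) * ((2 * a) ^ m * ln (2 ^ m / h) ^ (m - 1) / fact (m - 1))"
    using power_le_log_power_div_fact[OF assms(1,4,5,6)] by (intro mult_left_mono) auto
  also have "\<dots> \<le> 1 / (p - 1) * (h powr (1 - p) * ((2 * a) ^ m * ln (2 ^ m / h) ^ (m - 1) / fact (m - 1)))"
    using \<open>0 \<le> ln (2 ^ m / h)\<close> assms by (intro le_one_div_mult) auto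
  finally show ?thesis by (simp add: mult_ac)
qed

lemma powr_power_le_powr_bound:
  fixes a h p e :: real
  assumes "0 \<le> a" "1 < p" "p \<le> 2" "0 < h" "h \<le> 1" "0 < e" "e \<le> 1"
  shows "h powr (1 - p) * a ^ m \<le> (2 powr e * (2 * a) / e) ^ m / (p - 1) * h powr (1 - p - e)"
proof -
  have "1 \<le> 2 powr e * (2 / e)"
    using assms ge_one_powr_ge_zero[of 2 e] mult_mono[of 1 "2 powr e" 1 "2 / e"]
    by (simp add: field_simps)
  from mult_right_mono[OF this assms(1)] have "a \<le> 2 powr e * (2 / e) * a"
    by (simp only: mult_1)
  also have "\<dots> = 2 powr e * (2 * a) / e" by simp
  finally have "h powr (1 - p) * a ^ m \<le> h powr (1 - p - e) * (2 powr e * (2 * a) / e) ^ m"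
    using assms by (intro mult_mono powr_mono' power_mono) auto
  also have "\<dots> \<le> 1 / (p - 1) * (h powr (1 - p - e) * (2 powr e * (2 * a) / e) ^ m)"
    using assms by (intro le_one_div_mult) auto
  finally show ?thesis by (simp add: mult_ac)
qed

theorem lemma4p7:
  fixes lam :: "real measure" and p :: real
  assumes "levy_like lam"
    and "1 < p" and "p < 2"
    and "(\<integral>\<^sup>+ v. indicator {0<..<1} v * ennreal (v powr p) \<partial>lam) < \<infinity>"
    and "(\<integral>\<^sup>+ v. indicator {1..} v * ennreal v \<partial>lam) < \<infinity>"
  shows "\<exists>c :: real \<Rightarrow> real. (c \<longlongrightarrow> 0) at_top \<and> (\<forall>q\<ge>1. 0 \<le> c q) \<and>
    (\<forall>q\<ge>1. \<forall>m\<ge>1. \<forall>h. 0 < h \<and> h < 1 \<longrightarrow>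
       trunc_int lam q m h \<le> ennreal (1 / (p - 1) * (c q ^ m * h powr (1 - p) / fact (m - 1))
                                     * (ln (2 ^ m / h)) ^ (m - 1))
     \<and> (\<forall>\<epsilon>. 0 < \<epsilon> \<and> \<epsilon> < 1 \<longrightarrow>
       trunc_int lam q m h \<le> ennreal ((2 powr \<epsilon> * c q / \<epsilon>) ^ m / (p - 1) * h powr (1 - p - \<epsilon>))))"
proof -
  define a where "a q = (\<integral>u. trunc_weight p q u \<partial>lam)" for q
  have dom: "integrable lam (moment_weight p)"
    using assms(1,4,5) by (rule integrable_moment_weight)
  have a_nonneg: "0 \<le> a q" for q
    by (simp add: a_def trunc_weight_nonneg)
  have bound: "trunc_int lam q m h \<le> ennreal (h powr (1 - p) * a q ^ m)" if "1 \<le> q" "0 < h" for q h m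
    using trunc_int_le_trunc_moment_power[of lam q h p m] that assms(1,2) a_nonneg
      nn_integral_eq_integral[OF integrable_trunc_weight[OF assms(1) dom that(1)]]
    by (simp add: a_def trunc_weight_nonneg ennreal_power ennreal_mult)
  show ?thesis
  proof (intro exI[of _ "\<lambda>q. 2 * a q"] conjI allI impI)
    show "((\<lambda>q. 2 * a q) \<longlongrightarrow> 0) at_top"
      using tendsto_mult_right_zero[OF trunc_moment_tendsto_0[OF assms(1) dom assms(2)]]
      by (simp add: a_def mult.commute)
    show "0 \<le> 2 * a q" for q using a_nonneg by simp
    fix q h e :: real and m :: nat
    assume q: "1 \<le> q" and m: "1 \<le> m" and h: "0 < h \<and> h < 1"
    show "trunc_int lam q m h \<le> ennreal (1 / (p - 1) * ((2 * a q) ^ m * h powr (1 - p) / fact (m - 1))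
                                     * (ln (2 ^ m / h)) ^ (m - 1))"
      using h assms(2,3) a_nonneg
      by (intro order_trans[OF bound[OF q]] ennreal_leI powr_power_le_log_fact_bound m) auto
    assume "0 < e \<and> e < 1"
    then show "trunc_int lam q m h \<le> ennreal ((2 powr e * (2 * a q) / e) ^ m / (p - 1) * h powr (1 - p - e))"
      using h assms(2,3) a_nonneg
      by (intro order_trans[OF bound[OF q]] ennreal_leI powr_power_le_powr_bound) auto
  qed
qed

end
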